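(* Let $\mathcal{P}$ be a polyomino, $\mathbb{K}$ a field, $S=\mathbb{K}[x_v \mid v\in V(\mathcal{P})]$ standard graded, $I_{\mathcal{P}}\subset S$ the polyomino ideal and $J_{\mathcal{P}}\subset S$ the toric ideal of $\mathcal{P}$ (both defined in the context). Then $I_{\mathcal{P}}=(J_{\mathcal{P}})_2$, i.e. $I_{\mathcal{P}}$ is the ideal generated by the homogeneous component of degree $2$ of $J_{\mathcal{P}}$; equivalently, the minimal generators of $I_{\mathcal{P}}$ are exactly the minimal generators of degree $2$ of $J_{\mathcal{P}}$.
   Context: For $a\in\mathbb{N}^2$ the cell $[a,a+(1,1)]$ has vertices $a,a+(1,0),a+(0,1),a+(1,1)$ and the four obvious edges. A polyomino $\mathcal{P}$ is a finite nonempty set of cells such that any two cells $C,D\in\mathcal{P}$ are joined by a sequence $C=C_1,\dots,C_m=D$ of cells of $\mathcal{P}$ with $C_i\cap C_{i+1}$ an edge of $C_i$. $V(\mathcal{P})$ is the union of the vertex sets of its cells. For $a=(i,j)$, $b=(k,\ell)$ with $i<k$, $j<\ell$, the interval $[a,b]=\{(p,q)\in\mathbb{N}^2: i\le p\le k,\ j\le q\le \ell\}$ is a proper interval; $a,b$ are its diagonal corners and $c=(i,\ell)$, $d=(k,j)$ its anti-diagonal corners. It is an inner interval of $\mathcal{P}$ if all cells contained in $[a,b]$ belong to $\mathcal{P}$. The polyomino ideal $I_{\mathcal{P}}$ is generated by all inner 2-minors $x_ax_b-x_cx_d$, $[a,b]$ an inner interval of $\mathcal{P}$ with anti-diagonal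 corners $c,d$. Toric ideal: a hole of $\mathcal{P}$ is a finite nonempty set $\mathcal{H}$ of cells of $\mathbb{N}^2$ not in $\mathcal{P}$, any two of which are connected by a path of cells in $\mathcal{H}$ (consecutive cells sharing an edge), and maximal with these properties. Order $\mathbb{N}^2$ by $(a_1,a_2)<(b_1,b_2)$ iff $a_1<b_1$, or $a_1=b_1$ and $a_2<b_2$; the lower left corner of a hole is the minimum of its vertices. Let $\mathcal{H}_1,\dots,\mathcal{H}_r$ be the holes of $\mathcal{P}$ with lower left corners $e_k=(i_k,j_k)$, and $\mathcal{F}_k=\{(i,j)\in V(\mathcal{P}): i\le i_k,\ j\le j_k\}$. A horizontal edge interval of $\mathcal{P}$ is a set $\{(t,j): i\le t\le k\}$ such that $\{(t,j),(t+1,j)\}$ is an edge of a cell of $\mathcal{P}$ for $t=i,\dots,k-1$; it is maximal if not strictly contained in another one; vertical edge intervals are defined analogously. Each vertex $a\in V(\mathcal{P})$ lies in a unique maximal horizontal edge interval $H(a)$ and a unique maximal vertical edge interval $V(a)$. Take variables $h_H$ for each maximal horizontal edge interval $H$, $v_V$ for each maximal vertical edge interval $V$, and $w_1,\dots,w_r$, and define $\varphi:S\to\mathbb{K}[h_H,v_V,w_k]$ by $\varphi(x_a)=h_{H(a)}v_{V(a)}\prod_{k:\,a\in\mathcal{F}_k}w_k$. The toric ideal is $J_{\mathcal{P}}=\ker\varphi$. *)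

theory Defs
  imports Main "HOL-Library.Poly_Mapping" "HOL-Library.Product_Lexorder"
begin

text \<open>Points of N^2 are pairs of naturals. A cell [a, a+(1,1)] is represented
by its lower left corner a. The order on pairs is the lexicographic one
(Product_Lexorder), as in the paper.\<close>

type_synonym pt = "nat \<times> nat"

definition cell_vertices :: "pt \<Rightarrow> pt set" where
  "cell_vertices a = {a, (fst a + 1, snd a), (fst a, snd a + 1), (fst a + 1, snd a + 1)}"

definition cell_edges :: "pt \<Rightarrow> pt set set" where
  "cell_edges a = {{a, (fst a + 1, snd a)}, {a, (fst a, snd a + 1)},
                   {(fst a + 1, snd a), (fst a + 1, snd a + 1)},
                   {(fst a, snd a + 1), (fst a + 1, snd a + 1)}}"

definition cell_adj :: "pt \<Rightarrow> pt \<Rightarrow> bool" where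
  "cell_adj c d \<longleftrightarrow> cell_vertices c \<inter> cell_vertices d \<in> cell_edges c"

definition cells_connected :: "pt set \<Rightarrow> bool" where
  "cells_connected A \<longleftrightarrow>
     (\<forall>c\<in>A. \<forall>d\<in>A. (\<lambda>x y. x \<in> A \<and> y \<in> A \<and> cell_adj x y)\<^sup>*\<^sup>* c d)"

definition polyomino :: "pt set \<Rightarrow> bool" where
  "polyomino P \<longleftrightarrow> finite P \<and> P \<noteq> {} \<and> cells_connected P"

definition vertices :: "pt set \<Rightarrow> pt set" where
  "vertices P = (\<Union>c\<in>P. cell_vertices c)"

definition inner_interval :: "pt set \<Rightarrow> pt \<Rightarrow> pt \<Rightarrow> bool" where
  "inner_interval P a b \<longleftrightarrow> fst a < fst b \<and> snd a < snd b \<and>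
     (\<forall>c. cell_vertices c \<subseteq> {p. fst a \<le> fst p \<and> fst p \<le> fst b \<and> snd a \<le> snd p \<and> snd p \<le> snd b}
          \<longrightarrow> c \<in> P)"

type_synonym 'k poly2 = "(pt \<Rightarrow>\<^sub>0 nat) \<Rightarrow>\<^sub>0 'k"

definition var :: "pt \<Rightarrow> 'k::comm_ring_1 poly2" where
  "var a = Poly_Mapping.single (Poly_Mapping.single a 1) 1"

definition polyring :: "pt set \<Rightarrow> 'k::comm_ring_1 poly2 set" where
  "polyring V = {p. \<forall>m\<in>Poly_Mapping.keys p. Poly_Mapping.keys m \<subseteq> V}"

inductive_set ideal_gen :: "'a::comm_ring_1 set \<Rightarrow> 'a set \<Rightarrow> 'a set" for R G where
  zero: "0 \<in> ideal_gen R G"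
| gen: "g \<in> G \<Longrightarrow> g \<in> ideal_gen R G"
| add: "p \<in> ideal_gen R G \<Longrightarrow> q \<in> ideal_gen R G \<Longrightarrow> p + q \<in> ideal_gen R G"
| mult: "r \<in> R \<Longrightarrow> p \<in> ideal_gen R G \<Longrightarrow> r * p \<in> ideal_gen R G"

definition inner_minors :: "pt set \<Rightarrow> 'k::comm_ring_1 poly2 set" where
  "inner_minors P = {var a * var b - var (fst a, snd b) * var (fst b, snd a) | a b.
                       inner_interval P a b}"

definition polyomino_ideal :: "pt set \<Rightarrow> 'k::comm_ring_1 poly2 set" where
  "polyomino_ideal P = ideal_gen (polyring (vertices P)) (inner_minors P)"

definition hole :: "pt set \<Rightarrow> pt set \<Rightarrow> bool" where
  "hole P H \<longleftrightarrow> finite H \<and> H \<noteq> {} \<and> H \<inter> P = {} \<and> cells_connected H \<and>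
     (\<forall>H'. H \<subseteq> H' \<and> finite H' \<and> H' \<noteq> {} \<and> H' \<inter> P = {} \<and> cells_connected H' \<longrightarrow> H' = H)"

definition lower_left :: "pt set \<Rightarrow> pt" where
  "lower_left H = Min (vertices H)"

definition F_set :: "pt set \<Rightarrow> pt set \<Rightarrow> pt set" where
  "F_set P H = {v \<in> vertices P. fst v \<le> fst (lower_left H) \<and> snd v \<le> snd (lower_left H)}"

definition is_edge :: "pt set \<Rightarrow> pt set \<Rightarrow> bool" where
  "is_edge P e \<longleftrightarrow> (\<exists>c\<in>P. e \<in> cell_edges c)"

definition horiz_interval :: "pt set \<Rightarrow> pt set \<Rightarrow> bool" where
  "horiz_interval P E \<longleftrightarrow> (\<exists>i k j. i \<le> k \<and> E = {(t, j) | t. i \<le> t \<and> t \<le> k} \<and>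
       (\<forall>t. i \<le> t \<and> t < k \<longrightarrow> is_edge P {(t, j), (t + 1, j)}))"

definition vert_interval :: "pt set \<Rightarrow> pt set \<Rightarrow> bool" where
  "vert_interval P E \<longleftrightarrow> (\<exists>j l i. j \<le> l \<and> E = {(i, t) | t. j \<le> t \<and> t \<le> l} \<and>
       (\<forall>t. j \<le> t \<and> t < l \<longrightarrow> is_edge P {(i, t), (i, t + 1)}))"

definition max_horiz :: "pt set \<Rightarrow> pt set \<Rightarrow> bool" where
  "max_horiz P E \<longleftrightarrow> horiz_interval P E \<and> (\<forall>E'. horiz_interval P E' \<and> E \<subseteq> E' \<longrightarrow> E' = E)"

definition max_vert :: "pt set \<Rightarrow> pt set \<Rightarrow> bool" where
  "max_vert P E \<longleftrightarrow> vert_interval P E \<and> (\<forall>E'. vert_interval P E' \<and> E \<subseteq> E' \<longrightarrow> E' = E)"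

definition Hint :: "pt set \<Rightarrow> pt \<Rightarrow> pt set" where
  "Hint P a = (THE E. max_horiz P E \<and> a \<in> E)"

definition Vint :: "pt set \<Rightarrow> pt \<Rightarrow> pt set" where
  "Vint P a = (THE E. max_vert P E \<and> a \<in> E)"

text \<open>variables of the target ring: h_H, v_V (indexed by the maximal edge
intervals) and w_k (indexed by the holes themselves)\<close>
datatype tvar = hvar "pt set" | vvar "pt set" | wvar "pt set"

text \<open>exponent vector of phi(x_a) = h_{H(a)} v_{V(a)} prod_{a \<in> F_k} w_k\<close>
definition phi_exp :: "pt set \<Rightarrow> pt \<Rightarrow> tvar \<Rightarrow>\<^sub>0 nat" where
  "phi_exp P a = Poly_Mapping.single (hvar (Hint P a)) 1 + Poly_Mapping.single (vvar (Vint P a)) 1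
      + (\<Sum>H\<in>{H. hole P H \<and> a \<in> F_set P H}. Poly_Mapping.single (wvar H) 1)"

definition phi_mon :: "pt set \<Rightarrow> (pt \<Rightarrow>\<^sub>0 nat) \<Rightarrow> tvar \<Rightarrow>\<^sub>0 nat" where
  "phi_mon P m = (\<Sum>a\<in>Poly_Mapping.keys m. Poly_Mapping.map (\<lambda>e. Poly_Mapping.lookup m a * e) (phi_exp P a))"

definition phi :: "pt set \<Rightarrow> 'k::comm_ring_1 poly2 \<Rightarrow> (tvar \<Rightarrow>\<^sub>0 nat) \<Rightarrow>\<^sub>0 'k" where
  "phi P p = (\<Sum>m\<in>Poly_Mapping.keys p. Poly_Mapping.single (phi_mon P m) (Poly_Mapping.lookup p m))"

definition toric_ideal :: "pt set \<Rightarrow> 'k::comm_ring_1 poly2 set" where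
  "toric_ideal P = {p \<in> polyring (vertices P). phi P p = 0}"

definition mdeg :: "(pt \<Rightarrow>\<^sub>0 nat) \<Rightarrow> nat" where
  "mdeg m = (\<Sum>a\<in>Poly_Mapping.keys m. Poly_Mapping.lookup m a)"

definition homogeneous_of_degree :: "nat \<Rightarrow> 'k::comm_ring_1 poly2 \<Rightarrow> bool" where
  "homogeneous_of_degree d p \<longleftrightarrow> (\<forall>m\<in>Poly_Mapping.keys p. mdeg m = d)"

definition graded_part :: "nat \<Rightarrow> 'k::comm_ring_1 poly2 set \<Rightarrow> 'k poly2 set" where
  "graded_part d J = {p \<in> J. homogeneous_of_degree d p}"

end

theory Submission
  imports Defs
begin

(* Every inner 2-minor lies in J_P: the corners of an inner interval pair up along common maximal
   edge intervals, and no hole has its lower left corner inside the interval. Conversely, (J_P)_2 is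
   spanned by binomials x_a x_b - x_c x_d with phi(x_a x_b) = phi(x_c x_d). Comparing h- and
   v-exponents shows that c, d are the anti-diagonal corners of the rectangle with diagonal corners
   a, b, and that the boundary of this rectangle consists of edges of P. If some cell of the
   rectangle were missing from P, the cells outside P connected to it would form a hole inside the
   rectangle, whose w-variable divides exactly one of the four corner variables. Hence the rectangle
   is an inner interval and the binomial is a scalar multiple of its minor. *)

section \<open>Cells and edges\<close>

lemma mem_cell_vertices:
  "p \<in> cell_vertices (a, b) \<longleftrightarrow> a \<le> fst p \<and> fst p \<le> a + 1 \<and> b \<le> snd p \<and> snd p \<le> b + 1"
  by (cases p) (auto simp: cell_vertices_def)

lemma cell_vertices_Int_right:
  "cell_vertices (a, b) \<inter> cell_vertices (a + 1, b) = {(a + 1, b), (a + 1, b + 1)}"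
  by (auto simp: cell_vertices_def)

lemma cell_vertices_Int_up:
  "cell_vertices (a, b) \<inter> cell_vertices (a, b + 1) = {(a, b + 1), (a + 1, b + 1)}"
  by (auto simp: cell_vertices_def)

lemma cell_adj_iff:
  "cell_adj (a, b) (c, d) \<longleftrightarrow>
     (c = a + 1 \<and> d = b) \<or> (a = c + 1 \<and> d = b) \<or> (c = a \<and> d = b + 1) \<or> (c = a \<and> b = d + 1)"
proof
  let ?I = "cell_vertices (a, b) \<inter> cell_vertices (c, d)"
  have corner: "p \<in> ?I \<longleftrightarrow> c \<le> fst p \<and> fst p \<le> c + 1 \<and> d \<le> snd p \<and> snd p \<le> d + 1"
    if "p \<in> {(a, b), (a + 1, b), (a, b + 1), (a + 1, b + 1)}" for p
    using that by (auto simp: mem_cell_vertices)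
  assume "cell_adj (a, b) (c, d)"
  then have "?I = {(a, b), (a + 1, b)} \<or> ?I = {(a, b), (a, b + 1)} \<or>
      ?I = {(a + 1, b), (a + 1, b + 1)} \<or> ?I = {(a, b + 1), (a + 1, b + 1)}"
    by (simp add: cell_adj_def cell_edges_def)
  then show "(c = a + 1 \<and> d = b) \<or> (a = c + 1 \<and> d = b) \<or> (c = a \<and> d = b + 1) \<or> (c = a \<and> b = d + 1)"
    using corner[of "(a, b)"] corner[of "(a + 1, b)"] corner[of "(a, b + 1)"] corner[of "(a + 1, b + 1)"]
    by (elim disjE) simp_all
next
  assume "(c = a + 1 \<and> d = b) \<or> (a = c + 1 \<and> d = b) \<or> (c = a \<and> d = b + 1) \<or> (c = a \<and> b = d + 1)"
  then show "cell_adj (a, b) (c, d)"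
  proof (elim disjE)
    assume "c = a + 1 \<and> d = b" then show ?thesis
      using cell_vertices_Int_right[of a b] by (simp add: cell_adj_def cell_edges_def)
  next
    assume "a = c + 1 \<and> d = b" then show ?thesis
      using cell_vertices_Int_right[of c b] by (simp add: cell_adj_def cell_edges_def Int_commute)
  next
    assume "c = a \<and> d = b + 1" then show ?thesis
      using cell_vertices_Int_up[of a b] by (simp add: cell_adj_def cell_edges_def)
  next
    assume "c = a \<and> b = d + 1" then show ?thesis
      using cell_vertices_Int_up[of c d] by (simp add: cell_adj_def cell_edges_def Int_commute)
  qed
qed

lemma cell_adj_sym: "cell_adj x y \<Longrightarrow> cell_adj y x"
  by (cases x; cases y) (auto simp: cell_adj_iff)

(* Vertical edge intervals are treated as horizontal ones of the transposed polyomino. *)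

lemma swap_image_swap_image [simp]: "prod.swap ` prod.swap ` A = A"
  by (simp add: image_image)

lemma inj_image_swap: "inj ((`) (prod.swap :: pt \<Rightarrow> pt))"
  by (simp add: inj_def inj_image_eq_iff)

lemma cell_edges_swap: "cell_edges (prod.swap c) = (`) prod.swap ` cell_edges c"
  by (cases c) (simp add: cell_edges_def insert_commute)

lemma is_edge_swap: "is_edge (prod.swap ` P) (prod.swap ` e) \<longleftrightarrow> is_edge P e"
proof -
  have "prod.swap ` e \<in> cell_edges (prod.swap c) \<longleftrightarrow> e \<in> cell_edges c" for c
    unfolding cell_edges_swap by (rule inj_image_mem_iff[OF inj_image_swap])
  then show ?thesis
    by (simp add: is_edge_def)
qed

lemma edge_subset_vertices: "is_edge P e \<Longrightarrow> e \<subseteq> vertices P"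
  by (auto simp: is_edge_def cell_edges_def vertices_def cell_vertices_def)

lemma is_horiz_edge_cases:
  "is_edge P {(t, j), (t + 1, j)} \<Longrightarrow> (t, j) \<in> P \<or> (j \<ge> 1 \<and> (t, j - 1) \<in> P)"
  by (auto simp: is_edge_def cell_edges_def doubleton_eq_iff)

lemma is_vert_edge_cases:
  "is_edge P {(i, t), (i, t + 1)} \<Longrightarrow> (i, t) \<in> P \<or> (i \<ge> 1 \<and> (i - 1, t) \<in> P)"
  by (auto simp: is_edge_def cell_edges_def doubleton_eq_iff)

definition row_edges :: "pt set \<Rightarrow> nat \<Rightarrow> nat \<Rightarrow> nat \<Rightarrow> bool" where
  "row_edges P j i k \<longleftrightarrow> (\<forall>t. i \<le> t \<and> t < k \<longrightarrow> is_edge P {(t, j), (t + 1, j)})"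

definition col_edges :: "pt set \<Rightarrow> nat \<Rightarrow> nat \<Rightarrow> nat \<Rightarrow> bool" where
  "col_edges P i j l \<longleftrightarrow> (\<forall>t. j \<le> t \<and> t < l \<longrightarrow> is_edge P {(i, t), (i, t + 1)})"

lemma col_edges_swap: "col_edges P i j l \<longleftrightarrow> row_edges (prod.swap ` P) i j l"
  using is_edge_swap[of P "{(i, t), (i, t + 1)}" for t] by (simp add: col_edges_def row_edges_def)

lemma horiz_interval_iff:
  "horiz_interval P E \<longleftrightarrow> (\<exists>i k j. i \<le> k \<and> E = {(t, j) | t. i \<le> t \<and> t \<le> k} \<and> row_edges P j i k)"
  by (simp add: horiz_interval_def row_edges_def)

lemma vert_interval_iff_swap: "vert_interval P E \<longleftrightarrow> horiz_interval (prod.swap ` P) (prod.swap ` E)"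
proof -
  have swap_col: "prod.swap ` {(i, t) | t. j \<le> t \<and> t \<le> l} = {(t, i) | t. j \<le> t \<and> t \<le> l}" for i j l :: nat
    by force
  have swap_eq: "E = {(i, t) | t. j \<le> t \<and> t \<le> l} \<longleftrightarrow> prod.swap ` E = {(t, i) | t. j \<le> t \<and> t \<le> l}"
    for i j l
    unfolding swap_col[symmetric] by (rule inj_eq[OF inj_image_swap, symmetric])
  have "vert_interval P E \<longleftrightarrow>
      (\<exists>j l i. j \<le> l \<and> E = {(i, t) | t. j \<le> t \<and> t \<le> l} \<and> col_edges P i j l)"
    by (simp add: vert_interval_def col_edges_def)
  also have "\<dots> \<longleftrightarrow>
      (\<exists>j l i. j \<le> l \<and> prod.swap ` E = {(t, i) | t. j \<le> t \<and> t \<le> l} \<and> row_edges (prod.swap ` P) i j l)"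
    by (simp only: swap_eq col_edges_swap)
  also have "\<dots> \<longleftrightarrow> horiz_interval (prod.swap ` P) (prod.swap ` E)"
    by (simp only: horiz_interval_iff)
  finally show ?thesis .
qed

section \<open>Maximal edge intervals\<close>

lemma finite_vertices: "finite P \<Longrightarrow> finite (vertices P)"
  by (auto simp: vertices_def cell_vertices_def)

lemma row_edges_mono: "row_edges P j i k \<Longrightarrow> i \<le> i' \<Longrightarrow> k' \<le> k \<Longrightarrow> row_edges P j i' k'"
  by (simp add: row_edges_def)

lemma horiz_interval_Un:
  assumes "horiz_interval P E" "horiz_interval P E'" "z \<in> E" "z \<in> E'"
  shows "horiz_interval P (E \<union> E')"
proof -
  obtain i k j where E: "i \<le> k" "E = {(t, j) | t. i \<le> t \<and> t \<le> k}" "row_edges P j i k"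
    using assms(1) by (auto simp: horiz_interval_iff)
  obtain i' k' j' where E': "i' \<le> k'" "E' = {(t, j') | t. i' \<le> t \<and> t \<le> k'}" "row_edges P j' i' k'"
    using assms(2) by (auto simp: horiz_interval_iff)
  have z: "j = snd z" "j' = snd z" "i \<le> fst z" "fst z \<le> k" "i' \<le> fst z" "fst z \<le> k'"
    using assms(3,4) E(2) E'(2) by auto
  have "E \<union> E' = {(t, snd z) | t. min i i' \<le> t \<and> t \<le> max k k'}"
    using E(2) E'(2) z by auto
  moreover have "row_edges P (snd z) (min i i') (max k k')"
    unfolding row_edges_def
  proof (intro allI impI)
    fix t assume "min i i' \<le> t \<and> t < max k k'"
    then have "i \<le> t \<and> t < k \<or> i' \<le> t \<and> t < k'"
      using z by linarith
    then show "is_edge P {(t, snd z), (t + 1, snd z)}"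
      using E(3) E'(3) z(1,2) unfolding row_edges_def by blast
  qed
  ultimately show ?thesis
    unfolding horiz_interval_iff using E(1)
    by (intro exI[of _ "min i i'"] exI[of _ "max k k'"] exI[of _ "snd z"]) auto
qed

lemma horiz_interval_subset_vertices:
  assumes "horiz_interval P E" "x \<in> E"
  shows "E \<subseteq> insert x (vertices P)"
proof
  fix p assume "p \<in> E"
  obtain i k j where E: "E = {(t, j) | t. i \<le> t \<and> t \<le> k}" "row_edges P j i k"
    using assms(1) by (auto simp: horiz_interval_iff)
  show "p \<in> insert x (vertices P)"
  proof (cases "p = x")
    case False
    then obtain t where p: "p = (t, j)" "i \<le> t" "t \<le> k" and "i < k"
      using \<open>p \<in> E\<close> assms(2) E(1) by force
    show ?thesis
    proof (cases "t < k")
      case True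
      then have "is_edge P {(t, j), (t + 1, j)}"
        using E(2) p by (simp add: row_edges_def)
      then show ?thesis using edge_subset_vertices p by fastforce
    next
      case False
      then have "t = k - 1 + 1" using p \<open>i < k\<close> by simp
      moreover have "i \<le> k - 1 \<and> k - 1 < k" using \<open>i < k\<close> by linarith
      then have "is_edge P {(k - 1, j), (k - 1 + 1, j)}"
        using E(2) unfolding row_edges_def by blast
      ultimately show ?thesis using edge_subset_vertices p by fastforce
    qed
  qed simp
qed

lemma finite_horiz_intervals_through:
  "finite P \<Longrightarrow> finite {E. horiz_interval P E \<and> x \<in> E}"
  by (rule finite_subset[of _ "Pow (insert x (vertices P))"])
    (auto dest: horiz_interval_subset_vertices simp: finite_vertices)

lemma max_horiz_unique:
  assumes "max_horiz P E" "max_horiz P E'" "x \<in> E" "x \<in> E'"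
  shows "E = E'"
proof -
  have "horiz_interval P (E \<union> E')"
    using assms horiz_interval_Un unfolding max_horiz_def by blast
  then show ?thesis
    using assms(1,2) unfolding max_horiz_def by blast
qed

lemma max_horiz_Hint:
  assumes "finite P"
  shows "max_horiz P (Hint P x) \<and> x \<in> Hint P x"
proof -
  let ?A = "{E. horiz_interval P E \<and> x \<in> E}"
  have "horiz_interval P {x}"
    unfolding horiz_interval_iff row_edges_def
    by (intro exI[of _ "fst x"] exI[of _ "snd x"]) auto
  then have "{x} \<in> ?A" by simp
  then obtain E where "E \<in> ?A" "\<forall>E'\<in>?A. E \<subseteq> E' \<longrightarrow> E = E'"
    using finite_has_maximal[OF finite_horiz_intervals_through[OF assms]] by blast
  then have "max_horiz P E" "x \<in> E"
    unfolding max_horiz_def by auto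
  moreover from this have "Hint P x = E"
    unfolding Hint_def by (metis (mono_tags, lifting) max_horiz_unique the_equality)
  ultimately show ?thesis
    by simp
qed

lemma Hint_eq_iff:
  assumes "finite P"
  shows "Hint P x = Hint P y \<longleftrightarrow>
    snd x = snd y \<and> row_edges P (snd x) (min (fst x) (fst y)) (max (fst x) (fst y))"
proof
  assume "Hint P x = Hint P y"
  then have xy: "x \<in> Hint P x" "y \<in> Hint P x" and "horiz_interval P (Hint P x)"
    using max_horiz_Hint[OF assms] unfolding max_horiz_def by metis+
  then obtain i k j where "Hint P x = {(t, j) | t. i \<le> t \<and> t \<le> k}" "row_edges P j i k"
    by (auto simp: horiz_interval_iff)
  with xy show "snd x = snd y \<and> row_edges P (snd x) (min (fst x) (fst y)) (max (fst x) (fst y))"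
    by (auto elim!: row_edges_mono)
next
  assume xy: "snd x = snd y \<and> row_edges P (snd x) (min (fst x) (fst y)) (max (fst x) (fst y))"
  let ?E = "{(t, snd x) | t. min (fst x) (fst y) \<le> t \<and> t \<le> max (fst x) (fst y)}"
  have "horiz_interval P ?E"
    unfolding horiz_interval_iff using xy
    by (intro exI[of _ "min (fst x) (fst y)"] exI[of _ "max (fst x) (fst y)"] exI[of _ "snd x"]) auto
  moreover have "x \<in> ?E" "y \<in> ?E"
    using xy by (cases x, cases y, auto)+
  moreover have H: "max_horiz P (Hint P x)" "x \<in> Hint P x"
    using max_horiz_Hint[OF assms] by blast+
  ultimately have "horiz_interval P (?E \<union> Hint P x)"
    using horiz_interval_Un max_horiz_def by blast
  then have "?E \<union> Hint P x = Hint P x"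
    using H(1) unfolding max_horiz_def by (meson sup.cobounded2)
  then have "y \<in> Hint P x"
    using \<open>y \<in> ?E\<close> by blast
  then show "Hint P x = Hint P y"
    using max_horiz_Hint[OF assms] max_horiz_unique by blast
qed

lemma max_vert_iff_swap: "max_vert P E \<longleftrightarrow> max_horiz (prod.swap ` P) (prod.swap ` E)"
proof -
  have "(\<forall>E'. horiz_interval (prod.swap ` P) (prod.swap ` E') \<and> E \<subseteq> E' \<longrightarrow> E' = E) \<longleftrightarrow>
      (\<forall>F. horiz_interval (prod.swap ` P) F \<and> prod.swap ` E \<subseteq> F \<longrightarrow> F = prod.swap ` E)"
    by (metis inj_image_subset_iff inj_image_eq_iff inj_swap swap_image_swap_image)
  then show ?thesis
    by (simp add: max_vert_def max_horiz_def vert_interval_iff_swap)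
qed

lemma Vint_swap:
  assumes "finite P"
  shows "Vint P a = prod.swap ` Hint (prod.swap ` P) (prod.swap a)"
  unfolding Vint_def
proof (rule the_equality)
  have fin: "finite (prod.swap ` P)" using assms by simp
  show "max_vert P (prod.swap ` Hint (prod.swap ` P) (prod.swap a)) \<and> a \<in> prod.swap ` Hint (prod.swap ` P) (prod.swap a)"
    using max_horiz_Hint[OF fin, of "prod.swap a"] by (auto simp: max_vert_iff_swap image_iff intro: bexI[of _ "prod.swap a"])
  fix E assume "max_vert P E \<and> a \<in> E"
  then have "max_horiz (prod.swap ` P) (prod.swap ` E)" "prod.swap a \<in> prod.swap ` E"
    by (auto simp: max_vert_iff_swap)
  then have "prod.swap ` E = Hint (prod.swap ` P) (prod.swap a)"
    using max_horiz_Hint[OF fin] max_horiz_unique by blast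
  then show "E = prod.swap ` Hint (prod.swap ` P) (prod.swap a)"
    by (metis swap_image_swap_image)
qed

lemma Vint_eq_iff:
  assumes "finite P"
  shows "Vint P x = Vint P y \<longleftrightarrow>
    fst x = fst y \<and> col_edges P (fst x) (min (snd x) (snd y)) (max (snd x) (snd y))"
proof -
  have fin: "finite (prod.swap ` P)" using assms by simp
  have "Vint P x = Vint P y \<longleftrightarrow> Hint (prod.swap ` P) (prod.swap x) = Hint (prod.swap ` P) (prod.swap y)"
    unfolding Vint_swap[OF assms] by (rule inj_eq[OF inj_image_swap])
  then show ?thesis
    by (simp add: Hint_eq_iff[OF fin] col_edges_swap)
qed

section \<open>Holes\<close>

abbreviation adj_in :: "pt set \<Rightarrow> pt \<Rightarrow> pt \<Rightarrow> bool" where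
  "adj_in A \<equiv> \<lambda>x y. x \<in> A \<and> y \<in> A \<and> cell_adj x y"

lemma symp_adj_in: "symp (adj_in A)"
  by (auto intro: sympI cell_adj_sym)

lemma adj_in_rtranclp_mono: "A \<subseteq> B \<Longrightarrow> (adj_in A)\<^sup>*\<^sup>* x y \<Longrightarrow> (adj_in B)\<^sup>*\<^sup>* x y"
  by (rule rtranclp_mono[THEN predicate2D, rotated]) auto

lemma cells_connected_from:
  assumes "\<And>c. c \<in> A \<Longrightarrow> (adj_in A)\<^sup>*\<^sup>* z c"
  shows "cells_connected A"
  unfolding cells_connected_def
proof (intro ballI)
  fix c d assume "c \<in> A" "d \<in> A"
  then have "(adj_in A)\<^sup>*\<^sup>* c z" "(adj_in A)\<^sup>*\<^sup>* z d"
    using assms sympD[OF symp_rtranclp[OF symp_adj_in]] by blast+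
  then show "(adj_in A)\<^sup>*\<^sup>* c d"
    by (rule rtranclp_trans)
qed

lemma cells_connected_Un:
  assumes "cells_connected A" "cells_connected B" "z \<in> A" "z \<in> B"
  shows "cells_connected (A \<union> B)"
proof (rule cells_connected_from)
  fix c assume "c \<in> A \<union> B"
  then have "(adj_in A)\<^sup>*\<^sup>* z c \<or> (adj_in B)\<^sup>*\<^sup>* z c"
    using assms unfolding cells_connected_def by blast
  then show "(adj_in (A \<union> B))\<^sup>*\<^sup>* z c"
    using adj_in_rtranclp_mono[of A "A \<union> B"] adj_in_rtranclp_mono[of B "A \<union> B"] by blast
qed

lemma cells_connected_adj_pair: "cell_adj c d \<Longrightarrow> cells_connected {c, d}"
  by (auto simp: cells_connected_def intro: cell_adj_sym)

lemma holeD: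
  assumes "hole P H"
  shows "finite H" "H \<noteq> {}" "H \<inter> P = {}" "cells_connected H"
  using assms by (simp_all add: hole_def)

lemma hole_maximal:
  assumes "hole P H" "H \<subseteq> H'" "finite H'" "H' \<inter> P = {}" "cells_connected H'"
  shows "H' = H"
  using assms unfolding hole_def by blast

lemma hole_unique:
  assumes "hole P H" "hole P H'" "c \<in> H" "c \<in> H'"
  shows "H = H'"
proof -
  have "cells_connected (H \<union> H')"
    using assms holeD(4) by (intro cells_connected_Un[of _ _ c])
  moreover have "finite (H \<union> H')" "(H \<union> H') \<inter> P = {}"
    using holeD[OF assms(1)] holeD[OF assms(2)] by auto
  ultimately have "H \<union> H' = H" "H \<union> H' = H'"
    using hole_maximal assms(1,2) by (metis Un_upper1 Un_upper2)+
  then show ?thesis by blast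
qed

lemma hole_right_neighbour_in:
  assumes "hole P H"
  shows "\<exists>c\<in>H. (fst c + 1, snd c) \<in> P"
proof -
  note fin = holeD(1)[OF assms] and ne = holeD(2)[OF assms]
  have "Max (fst ` H) \<in> fst ` H" using fin ne by simp
  then obtain c where c: "c \<in> H" "fst c = Max (fst ` H)" by auto
  let ?d = "(fst c + 1, snd c)"
  have "?d \<notin> H"
  proof
    assume "?d \<in> H"
    then have "fst ?d \<in> fst ` H" by (rule imageI)
    then have "fst ?d \<le> Max (fst ` H)" using fin by simp
    then show False using c(2) by simp
  qed
  moreover have "?d \<in> P" if "?d \<notin> P"
  proof -
    have "cell_adj c ?d" by (cases c) (simp add: cell_adj_iff)
    then have "cells_connected (H \<union> {c, ?d})"
      using holeD(4)[OF assms] c(1) cells_connected_adj_pair by (intro cells_connected_Un[of _ _ c]) auto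
    moreover have "(H \<union> {c, ?d}) \<inter> P = {}"
      using holeD(3)[OF assms] c(1) that by auto
    ultimately have "H \<union> {c, ?d} = H"
      using fin by (intro hole_maximal[OF assms]) auto
    then show ?thesis using \<open>?d \<notin> H\<close> by blast
  qed
  ultimately show ?thesis using c(1) by blast
qed

lemma finite_holes:
  assumes "finite P"
  shows "finite {H. hole P H}"
proof -
  define c where "c H = (SOME c. c \<in> H \<and> (fst c + 1, snd c) \<in> P)" for H
  have c: "c H \<in> H \<and> (fst (c H) + 1, snd (c H)) \<in> P" if "hole P H" for H
    unfolding c_def using hole_right_neighbour_in[OF that] by (rule someI2_bex) auto
  have "inj_on c {H. hole P H}"
  proof (rule inj_onI)
    fix H H' assume "H \<in> {H. hole P H}" "H' \<in> {H. hole P H}" "c H = c H'"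
    then show "H = H'" using c hole_unique by (metis mem_Collect_eq)
  qed
  moreover have "c ` {H. hole P H} \<subseteq> (\<lambda>p. (fst p - 1, snd p)) ` P"
  proof
    fix y assume "y \<in> c ` {H. hole P H}"
    then have "(fst y + 1, snd y) \<in> P" using c by auto
    then show "y \<in> (\<lambda>p. (fst p - 1, snd p)) ` P"
      by (intro image_eqI[of _ _ "(fst y + 1, snd y)"]) auto
  qed
  ultimately show ?thesis
    using assms by (simp add: inj_on_finite)
qed

lemma lower_left_in:
  assumes "finite H" "H \<noteq> {}"
  shows "lower_left H \<in> H"
proof -
  have fin: "finite (vertices H)" and "vertices H \<noteq> {}"
    using assms by (auto simp: vertices_def cell_vertices_def)
  then have "lower_left H \<in> vertices H"
    unfolding lower_left_def by (rule Min_in)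
  then obtain c where c: "c \<in> H" "lower_left H \<in> cell_vertices c"
    by (auto simp: vertices_def)
  have "c \<in> vertices H"
    using c(1) by (auto simp: vertices_def cell_vertices_def)
  then have "lower_left H \<le> c"
    using fin unfolding lower_left_def by simp
  with c(2) have "lower_left H = c"
    by (cases c) (auto simp: cell_vertices_def)
  with c(1) show ?thesis by simp
qed

lemma rtranclp_adj_in_mem: "(adj_in A)\<^sup>*\<^sup>* q x \<Longrightarrow> q \<in> A \<Longrightarrow> x \<in> A"
  by (induction rule: rtranclp_induct) auto

definition free_component :: "pt set \<Rightarrow> pt \<Rightarrow> pt set" where
  "free_component P q = {x. (adj_in (- P))\<^sup>*\<^sup>* q x}"

lemma self_in_free_component: "q \<in> free_component P q"
  by (simp add: free_component_def)

lemma hole_free_component: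
  assumes "q \<notin> P" "finite (free_component P q)"
  shows "hole P (free_component P q)"
proof -
  let ?C = "free_component P q"
  note q = self_in_free_component[of q P]
  have "x \<notin> P" if "x \<in> ?C" for x
    using rtranclp_adj_in_mem[of "- P" q x] that assms(1) by (simp add: free_component_def)
  then have "?C \<inter> P = {}"
    by blast
  moreover have "cells_connected ?C"
  proof (rule cells_connected_from)
    fix x assume "x \<in> ?C"
    then have "(adj_in (- P))\<^sup>*\<^sup>* q x"
      by (simp add: free_component_def)
    then show "(adj_in ?C)\<^sup>*\<^sup>* q x"
    proof (induction rule: rtranclp_induct)
      case (step y z)
      then have "adj_in ?C y z"
        by (auto simp: free_component_def intro: rtranclp.rtrancl_into_rtrancl)
      with step.IH show ?case
        by (rule rtranclp.rtrancl_into_rtrancl)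
    qed simp
  qed
  moreover have "H' = ?C"
    if "?C \<subseteq> H'" "H' \<inter> P = {}" "cells_connected H'" for H'
  proof -
    have "y \<in> ?C" if "y \<in> H'" for y
    proof -
      have "(adj_in H')\<^sup>*\<^sup>* q y"
        using \<open>cells_connected H'\<close> q \<open>?C \<subseteq> H'\<close> \<open>y \<in> H'\<close> unfolding cells_connected_def by blast
      moreover have "H' \<subseteq> - P"
        using \<open>H' \<inter> P = {}\<close> by blast
      ultimately show ?thesis
        unfolding free_component_def using adj_in_rtranclp_mono by blast
    qed
    then show ?thesis
      using \<open>?C \<subseteq> H'\<close> by blast
  qed
  ultimately show ?thesis
    using assms(2) q unfolding hole_def by blast
qed

lemma adj_free_cell_in_rectangle:
  assumes "row_edges P j i k" "row_edges P l i k" "col_edges P i j l" "col_edges P k j l"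
    and "y \<in> {i..<k} \<times> {j..<l}" "y \<notin> P" "z \<notin> P" "cell_adj y z"
  shows "z \<in> {i..<k} \<times> {j..<l}"
proof -
  obtain a b where y: "y = (a, b)" by (cases y)
  obtain c d where z: "z = (c, d)" by (cases z)
  have e: "is_edge P {(a, j), (a + 1, j)}" "is_edge P {(a, l), (a + 1, l)}"
    "is_edge P {(i, b), (i, b + 1)}" "is_edge P {(k, b), (k, b + 1)}"
    using assms(1-5) y by (auto simp: row_edges_def col_edges_def)
  from assms(8) consider "c = a + 1" "d = b" | "a = c + 1" "d = b" | "c = a" "d = b + 1" | "c = a" "b = d + 1"
    unfolding y z cell_adj_iff by blast
  then show ?thesis
  proof cases
    case 1
    then have "a + 1 \<noteq> k" using is_vert_edge_cases[OF e(4)] assms(6,7) y z by auto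
    then show ?thesis using assms(5) y z 1 by auto
  next
    case 2
    then have "a \<noteq> i" using is_vert_edge_cases[OF e(3)] assms(6,7) y z by auto
    then show ?thesis using assms(5) y z 2 by auto
  next
    case 3
    then have "b + 1 \<noteq> l" using is_horiz_edge_cases[OF e(2)] assms(6,7) y z by auto
    then show ?thesis using assms(5) y z 3 by auto
  next
    case 4
    then have "b \<noteq> j" using is_horiz_edge_cases[OF e(1)] assms(6,7) y z by auto
    then show ?thesis using assms(5) y z 4 by auto
  qed
qed

lemma free_component_subset_rectangle:
  assumes "row_edges P j i k" "row_edges P l i k" "col_edges P i j l" "col_edges P k j l"
    and "q \<in> {i..<k} \<times> {j..<l}" "q \<notin> P"
  shows "free_component P q \<subseteq> {i..<k} \<times> {j..<l}"
proof
  fix x assume "x \<in> free_component P q"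
  then have "(adj_in (- P))\<^sup>*\<^sup>* q x"
    by (simp add: free_component_def)
  then show "x \<in> {i..<k} \<times> {j..<l}"
    by (induction rule: rtranclp_induct) (use assms adj_free_cell_in_rectangle in auto)
qed

section \<open>The toric map\<close>

lemma lookup_phi_exp:
  assumes "finite P"
  shows "Poly_Mapping.lookup (phi_exp P a) (hvar X) = of_bool (Hint P a = X)"
    and "Poly_Mapping.lookup (phi_exp P a) (vvar X) = of_bool (Vint P a = X)"
    and "Poly_Mapping.lookup (phi_exp P a) (wvar H) = of_bool (hole P H \<and> a \<in> F_set P H)"
proof -
  let ?S = "{H. hole P H \<and> a \<in> F_set P H}"
  have "finite ?S"
    by (rule finite_subset[OF _ finite_holes[OF assms]]) auto
  then show "Poly_Mapping.lookup (phi_exp P a) (wvar H) = of_bool (hole P H \<and> a \<in> F_set P H)"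
    by (simp add: phi_exp_def lookup_add lookup_sum lookup_single when_def sum.If_cases)
qed (simp_all add: phi_exp_def lookup_add lookup_sum lookup_single when_def)

lemma pair_eq_if_of_bool_sums_eq:
  assumes "\<And>X. of_bool (A = X) + of_bool (B = X) = (of_bool (C = X) + of_bool (D = X) :: nat)"
  shows "A = C \<and> B = D \<or> A = D \<and> B = C"
proof (cases "C = A")
  case True
  then show ?thesis using assms[of B] by (cases "A = B") (simp_all add: of_bool_def split: if_splits)
next
  case False
  then have "D = A" using assms[of A] by (simp add: of_bool_def split: if_splits)
  then show ?thesis using assms[of B] by (cases "A = B") (simp_all add: of_bool_def split: if_splits)
qed

lemma phi_exp_add_eq_cases:
  assumes "finite P" "phi_exp P a + phi_exp P b = phi_exp P c + phi_exp P d"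
  shows "Hint P a = Hint P c \<and> Hint P b = Hint P d \<or> Hint P a = Hint P d \<and> Hint P b = Hint P c"
    and "Vint P a = Vint P c \<and> Vint P b = Vint P d \<or> Vint P a = Vint P d \<and> Vint P b = Vint P c"
    and "hole P H \<Longrightarrow> of_bool (a \<in> F_set P H) + of_bool (b \<in> F_set P H)
           = (of_bool (c \<in> F_set P H) + of_bool (d \<in> F_set P H) :: nat)"
proof -
  have lookup: "Poly_Mapping.lookup (phi_exp P a) t + Poly_Mapping.lookup (phi_exp P b) t
      = Poly_Mapping.lookup (phi_exp P c) t + Poly_Mapping.lookup (phi_exp P d) t" for t
    using assms(2) by (metis lookup_add)
  show "Hint P a = Hint P c \<and> Hint P b = Hint P d \<or> Hint P a = Hint P d \<and> Hint P b = Hint P c"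
    using lookup[of "hvar _"] by (intro pair_eq_if_of_bool_sums_eq) (simp add: lookup_phi_exp[OF assms(1)])
  show "Vint P a = Vint P c \<and> Vint P b = Vint P d \<or> Vint P a = Vint P d \<and> Vint P b = Vint P c"
    using lookup[of "vvar _"] by (intro pair_eq_if_of_bool_sums_eq) (simp add: lookup_phi_exp[OF assms(1)])
  show "hole P H \<Longrightarrow> of_bool (a \<in> F_set P H) + of_bool (b \<in> F_set P H)
           = (of_bool (c \<in> F_set P H) + of_bool (d \<in> F_set P H) :: nat)"
    using lookup[of "wvar H"] by (simp add: lookup_phi_exp[OF assms(1)])
qed

definition mon2 :: "pt \<Rightarrow> pt \<Rightarrow> pt \<Rightarrow>\<^sub>0 nat" where
  "mon2 a b = Poly_Mapping.single a 1 + Poly_Mapping.single b 1"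

lemma lookup_mon2: "Poly_Mapping.lookup (mon2 a b) x = of_bool (x = a) + of_bool (x = b)"
  by (simp add: mon2_def lookup_add lookup_single when_def)

lemma keys_mon2: "Poly_Mapping.keys (mon2 a b) = {a, b}"
  by (rule set_eqI) (simp only: in_keys_iff lookup_mon2, auto)

lemma mdeg_mon2: "mdeg (mon2 a b) = 2"
  unfolding mdeg_def keys_mon2 lookup_mon2 by (cases "a = b") auto

lemma mon2_commute: "mon2 a b = mon2 b a"
  by (simp add: mon2_def add.commute)

lemma lookup_phi_mon:
  "Poly_Mapping.lookup (phi_mon P m) t
     = (\<Sum>a\<in>Poly_Mapping.keys m. Poly_Mapping.lookup m a * Poly_Mapping.lookup (phi_exp P a) t)"
proof -
  have "Poly_Mapping.lookup (Poly_Mapping.map (\<lambda>x. n * x) e) t = n * Poly_Mapping.lookup e t" for n :: nat and e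
    by (simp add: map.rep_eq when_def)
  then show ?thesis
    by (simp add: phi_mon_def lookup_sum)
qed

lemma phi_mon_mon2: "phi_mon P (mon2 a b) = phi_exp P a + phi_exp P b"
  by (rule poly_mapping_eqI)
    (unfold lookup_phi_mon keys_mon2 lookup_mon2, cases "a = b", auto simp: lookup_add)

lemma var_mult_var: "(var a * var b :: 'k::comm_ring_1 poly2) = Poly_Mapping.single (mon2 a b) 1"
  by (simp add: var_def mon2_def mult_single)

lemma mdeg_eq_2E:
  assumes "mdeg m = 2"
  obtains a b where "m = mon2 a b"
proof -
  let ?K = "Poly_Mapping.keys m" and ?l = "Poly_Mapping.lookup m"
  have sum: "(\<Sum>x\<in>?K. ?l x) = 2"
    using assms by (simp add: mdeg_def)
  then have "?K \<noteq> {}"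
    by auto
  then obtain a where a: "a \<in> ?K"
    by blast
  then have rest: "?l a + (\<Sum>x\<in>?K - {a}. ?l x) = 2"
    using sum by (simp add: sum.remove)
  show ?thesis
  proof (cases "?l a = 2")
    case True
    then have "\<forall>x\<in>?K - {a}. ?l x = 0"
      using rest by simp
    then have "?l x = 0" if "x \<noteq> a" for x
      using that by (metis DiffI in_keys_iff singletonD)
    then have "m = mon2 a a"
      using True by (intro poly_mapping_eqI) (simp only: lookup_mon2, auto)
    then show ?thesis ..
  next
    case False
    then have la: "?l a = 1" and "(\<Sum>x\<in>?K - {a}. ?l x) = 1"
      using rest a by (auto simp: in_keys_iff)
    moreover from this have "?K - {a} \<noteq> {}"
      by (metis sum.empty zero_neq_one)
    then obtain b where b: "b \<in> ?K" "b \<noteq> a"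
      by blast
    ultimately have "?l b + (\<Sum>x\<in>?K - {a} - {b}. ?l x) = 1"
      by (simp add: sum.remove)
    moreover have "?l b \<ge> 1"
      using b(1) by (simp add: in_keys_iff)
    ultimately have lb: "?l b = 1" and "(\<Sum>x\<in>?K - {a} - {b}. ?l x) = 0"
      by linarith+
    then have "\<forall>x\<in>?K - {a} - {b}. ?l x = 0"
      by simp
    then have "?l x = 0" if "x \<noteq> a" "x \<noteq> b" for x
      using that by (metis DiffI in_keys_iff singletonD)
    then have "m = mon2 a b"
      using la lb b(2) by (intro poly_mapping_eqI) (simp only: lookup_mon2, auto)
    then show ?thesis ..
  qed
qed

lemma phi_single: "phi P (Poly_Mapping.single m c) = Poly_Mapping.single (phi_mon P m) c"
  by (cases "c = 0") (simp_all add: phi_def)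

lemma phi_diff: "phi P (p - q) = phi P p - phi P q"
proof -
  let ?S = "Poly_Mapping.keys p \<union> Poly_Mapping.keys q"
  have phi_on: "phi P f = (\<Sum>m\<in>?S. Poly_Mapping.single (phi_mon P m) (Poly_Mapping.lookup f m))"
    if "Poly_Mapping.keys f \<subseteq> ?S" for f :: "'a poly2"
    unfolding phi_def by (rule sum.mono_neutral_left) (use that in \<open>auto simp: in_keys_iff\<close>)
  have "Poly_Mapping.keys (p - q) \<subseteq> ?S"
    by (auto simp: in_keys_iff lookup_minus)
  then show ?thesis
    by (simp add: phi_on lookup_minus single_diff sum_subtractf)
qed

lemma lookup_phi:
  "Poly_Mapping.lookup (phi P p) t = (\<Sum>m\<in>Poly_Mapping.keys p. if phi_mon P m = t then Poly_Mapping.lookup p m else 0)"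
  by (simp add: phi_def lookup_sum lookup_single when_def)

section \<open>Inner intervals\<close>

lemma inner_interval_iff_cells:
  "inner_interval P (i, j) (k, l) \<longleftrightarrow> i < k \<and> j < l \<and> {i..<k} \<times> {j..<l} \<subseteq> P"
proof -
  have "cell_vertices c \<subseteq> {p. i \<le> fst p \<and> fst p \<le> k \<and> j \<le> snd p \<and> snd p \<le> l}
      \<longleftrightarrow> c \<in> {i..<k} \<times> {j..<l}" for c
    by (cases c) (auto simp: cell_vertices_def)
  then show ?thesis
    by (auto simp: inner_interval_def)
qed

lemma is_edge_of_cell: "c \<in> P \<Longrightarrow> e \<in> cell_edges c \<Longrightarrow> is_edge P e"
  by (auto simp: is_edge_def)

lemma vertex_of_cell: "c \<in> P \<Longrightarrow> v \<in> cell_vertices c \<Longrightarrow> v \<in> vertices P"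
  by (auto simp: vertices_def)

lemma inner_interval_boundary_edges:
  assumes "inner_interval P (i, j) (k, l)"
  shows "row_edges P j i k" "row_edges P l i k" "col_edges P i j l" "col_edges P k j l"
proof -
  have ik: "i < k" "j < l" and cell: "\<And>a b. i \<le> a \<Longrightarrow> a < k \<Longrightarrow> j \<le> b \<Longrightarrow> b < l \<Longrightarrow> (a, b) \<in> P"
    using assms by (auto simp: inner_interval_iff_cells)
  show "row_edges P j i k"
    unfolding row_edges_def using cell ik by (auto intro!: is_edge_of_cell[of "(_, j)"] simp: cell_edges_def)
  show "row_edges P l i k"
    unfolding row_edges_def using cell ik by (auto intro!: is_edge_of_cell[of "(_, l - 1)"] simp: cell_edges_def)
  show "col_edges P i j l"
    unfolding col_edges_def using cell ik by (auto intro!: is_edge_of_cell[of "(i, _)"] simp: cell_edges_def)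
  show "col_edges P k j l"
    unfolding col_edges_def using cell ik by (auto intro!: is_edge_of_cell[of "(k - 1, _)"] simp: cell_edges_def)
qed

lemma inner_interval_corners:
  assumes "inner_interval P (i, j) (k, l)"
  shows "(i, j) \<in> vertices P" "(k, l) \<in> vertices P" "(i, l) \<in> vertices P" "(k, j) \<in> vertices P"
proof -
  have ik: "i < k" "j < l" and cell: "\<And>a b. i \<le> a \<Longrightarrow> a < k \<Longrightarrow> j \<le> b \<Longrightarrow> b < l \<Longrightarrow> (a, b) \<in> P"
    using assms by (auto simp: inner_interval_iff_cells)
  show "(i, j) \<in> vertices P"
    using ik by (intro vertex_of_cell[OF cell[of i j]]) (auto simp: cell_vertices_def)
  show "(k, l) \<in> vertices P"
    using ik by (intro vertex_of_cell[OF cell[of "k - 1" "l - 1"]]) (auto simp: cell_vertices_def)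
  show "(i, l) \<in> vertices P"
    using ik by (intro vertex_of_cell[OF cell[of i "l - 1"]]) (auto simp: cell_vertices_def)
  show "(k, j) \<in> vertices P"
    using ik by (intro vertex_of_cell[OF cell[of "k - 1" j]]) (auto simp: cell_vertices_def)
qed

lemma F_set_iff:
  "v \<in> vertices P \<Longrightarrow> v \<in> F_set P H \<longleftrightarrow> fst v \<le> fst (lower_left H) \<and> snd v \<le> snd (lower_left H)"
  by (simp add: F_set_def)

lemma phi_mon_diagonals_eq:
  assumes "finite P" "inner_interval P (i, j) (k, l)"
  shows "phi_mon P (mon2 (i, j) (k, l)) = phi_mon P (mon2 (i, l) (k, j))"
proof -
  have ik: "i < k" "j < l" and rect: "{i..<k} \<times> {j..<l} \<subseteq> P"
    using assms(2) by (auto simp: inner_interval_iff_cells)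
  note edges = inner_interval_boundary_edges[OF assms(2)]
  note corners = inner_interval_corners[OF assms(2)]
  have H: "Hint P (i, j) = Hint P (k, j)" "Hint P (i, l) = Hint P (k, l)"
    using edges ik by (simp_all add: Hint_eq_iff[OF assms(1)])
  have V: "Vint P (i, j) = Vint P (i, l)" "Vint P (k, j) = Vint P (k, l)"
    using edges ik by (simp_all add: Vint_eq_iff[OF assms(1)])
  have W: "of_bool ((i, j) \<in> F_set P H) + of_bool ((k, l) \<in> F_set P H)
      = (of_bool ((i, l) \<in> F_set P H) + of_bool ((k, j) \<in> F_set P H) :: nat)" if "hole P H" for H
  proof -
    obtain e1 e2 where e: "lower_left H = (e1, e2)" by fastforce
    have "lower_left H \<in> H"
      using holeD(1,2)[OF that] by (rule lower_left_in)
    then have "lower_left H \<notin> P"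
      using holeD(3)[OF that] by blast
    then have "\<not> (i \<le> e1 \<and> e1 < k \<and> j \<le> e2 \<and> e2 < l)"
      using rect e by (auto simp: subset_iff)
    then show ?thesis
      using corners ik by (auto simp: F_set_iff e)
  qed
  show ?thesis
    unfolding phi_mon_mon2
  proof (rule poly_mapping_eqI)
    fix t
    show "Poly_Mapping.lookup (phi_exp P (i, j) + phi_exp P (k, l)) t
        = Poly_Mapping.lookup (phi_exp P (i, l) + phi_exp P (k, j)) t"
    proof (cases t)
      case (wvar X)
      then show ?thesis
        using W[of X] by (cases "hole P X") (simp_all add: lookup_add lookup_phi_exp[OF assms(1)])
    qed (use H V in \<open>simp_all add: lookup_add lookup_phi_exp[OF assms(1)]\<close>)
  qed
qed

lemma inner_interval_if_phi_mon_diagonals_eq: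
  assumes "finite P" "i < k" "j < l"
    and corners: "(i, j) \<in> vertices P" "(k, l) \<in> vertices P" "(i, l) \<in> vertices P" "(k, j) \<in> vertices P"
    and "phi_mon P (mon2 (i, j) (k, l)) = phi_mon P (mon2 (i, l) (k, j))"
  shows "inner_interval P (i, j) (k, l)"
proof (rule ccontr)
  have eq: "phi_exp P (i, j) + phi_exp P (k, l) = phi_exp P (i, l) + phi_exp P (k, j)"
    using assms(8) unfolding phi_mon_mon2 .
  have "Hint P (i, j) \<noteq> Hint P (i, l)" "Vint P (i, j) \<noteq> Vint P (k, j)"
    using assms(2,3) by (simp_all add: Hint_eq_iff[OF assms(1)] Vint_eq_iff[OF assms(1)])
  then have "Hint P (i, j) = Hint P (k, j)" "Hint P (k, l) = Hint P (i, l)"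
    "Vint P (i, j) = Vint P (i, l)" "Vint P (k, l) = Vint P (k, j)"
    using phi_exp_add_eq_cases(1,2)[OF assms(1) eq] by blast+
  then have edges: "row_edges P j i k" "row_edges P l i k" "col_edges P i j l" "col_edges P k j l"
    using assms(2,3) by (simp_all add: Hint_eq_iff[OF assms(1)] Vint_eq_iff[OF assms(1)])
  assume "\<not> inner_interval P (i, j) (k, l)"
  (* the free cells connected to a missing cell q form a hole inside the rectangle; its
     w-variable divides the variable of the corner (i, j) but none of the other three *)
  then obtain q where q: "q \<in> {i..<k} \<times> {j..<l}" "q \<notin> P"
    using assms(2,3) by (auto simp: inner_interval_iff_cells)
  let ?C = "free_component P q"
  have C: "?C \<subseteq> {i..<k} \<times> {j..<l}"
    using free_component_subset_rectangle[OF edges q] .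
  then have "finite ?C"
    by (rule finite_subset) simp
  then have hole: "hole P ?C" and "lower_left ?C \<in> ?C"
    using hole_free_component[OF q(2)] lower_left_in self_in_free_component by blast+
  then have "lower_left ?C \<in> {i..<k} \<times> {j..<l}"
    using C by blast
  then have "(i, j) \<in> F_set P ?C" "(k, l) \<notin> F_set P ?C" "(i, l) \<notin> F_set P ?C" "(k, j) \<notin> F_set P ?C"
    using corners by (auto simp: F_set_iff)
  then show False
    using phi_exp_add_eq_cases(3)[OF assms(1) eq hole] by simp
qed

section \<open>Quadratic binomials\<close>

lemma ideal_gen_subsetI:
  assumes "G \<subseteq> ideal_gen R G'"
  shows "ideal_gen R G \<subseteq> ideal_gen R G'"
proof
  fix x assume "x \<in> ideal_gen R G"
  then show "x \<in> ideal_gen R G'"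
    by induction (use assms in \<open>auto intro: ideal_gen.intros\<close>)
qed

lemma minor_in_toric_ideal:
  assumes "finite P" "inner_interval P a b"
  shows "(var a * var b - var (fst a, snd b) * var (fst b, snd a) :: 'k::comm_ring_1 poly2)
           \<in> graded_part 2 (toric_ideal P)"
proof -
  obtain i j k l where ab: "a = (i, j)" "b = (k, l)" by fastforce
  let ?m = "mon2 (i, j) (k, l)" and ?m' = "mon2 (i, l) (k, j)"
  let ?p = "Poly_Mapping.single ?m 1 - Poly_Mapping.single ?m' (1 :: 'k)"
  have inner: "inner_interval P (i, j) (k, l)"
    using assms(2) ab by simp
  have keys: "Poly_Mapping.keys ?p \<subseteq> {?m, ?m'}"
    by (rule order_trans[OF keys_diff]) auto
  have "Poly_Mapping.keys ?m \<subseteq> vertices P" "Poly_Mapping.keys ?m' \<subseteq> vertices P"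
    using inner_interval_corners[OF inner] by (simp_all add: keys_mon2)
  then have "?p \<in> polyring (vertices P)"
    using keys by (auto simp: polyring_def)
  moreover have "phi P ?p = 0"
    by (simp add: phi_diff phi_single phi_mon_diagonals_eq[OF assms(1) inner])
  moreover have "homogeneous_of_degree 2 ?p"
    using keys mdeg_mon2 by (auto simp: homogeneous_of_degree_def)
  moreover have "var a * var b - var (fst a, snd b) * var (fst b, snd a) = ?p"
    by (simp add: ab var_mult_var)
  ultimately show ?thesis
    by (simp add: graded_part_def toric_ideal_def)
qed

lemma minor_multiple_in_polyomino_ideal:
  assumes "inner_interval P (i, j) (k, l)"
  shows "Poly_Mapping.single (mon2 (i, j) (k, l)) r - Poly_Mapping.single (mon2 (i, l) (k, j)) r
           \<in> (polyomino_ideal P :: 'k::comm_ring_1 poly2 set)"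
proof -
  have "var (i, j) * var (k, l) - var (i, l) * var (k, j) \<in> (inner_minors P :: 'k poly2 set)"
    using assms unfolding inner_minors_def by force
  then have "Poly_Mapping.single 0 r * (var (i, j) * var (k, l) - var (i, l) * var (k, j))
      \<in> (polyomino_ideal P :: 'k poly2 set)"
    unfolding polyomino_ideal_def
    by (intro ideal_gen.mult ideal_gen.gen) (auto simp: polyring_def)
  then show ?thesis
    by (simp add: var_mult_var right_diff_distrib mult_single)
qed

lemma rectangle_binomial_in_polyomino_ideal:
  assumes "finite P" "i < k" "j < l"
    and "(i, j) \<in> vertices P" "(k, l) \<in> vertices P" "(i, l) \<in> vertices P" "(k, j) \<in> vertices P"
    and "phi_mon P (mon2 (i, j) (k, l)) = phi_mon P (mon2 (i, l) (k, j))"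
    and "m = mon2 (i, j) (k, l) \<and> m' = mon2 (i, l) (k, j) \<or> m = mon2 (i, l) (k, j) \<and> m' = mon2 (i, j) (k, l)"
  shows "Poly_Mapping.single m r - Poly_Mapping.single m' r \<in> (polyomino_ideal P :: 'k::comm_ring_1 poly2 set)"
proof -
  have inner: "inner_interval P (i, j) (k, l)"
    using inner_interval_if_phi_mon_diagonals_eq assms(1-8) .
  from assms(9) show ?thesis
  proof
    assume "m = mon2 (i, l) (k, j) \<and> m' = mon2 (i, j) (k, l)"
    moreover have "Poly_Mapping.single (mon2 (i, j) (k, l)) (- r) - Poly_Mapping.single (mon2 (i, l) (k, j)) (- r)
        \<in> (polyomino_ideal P :: 'k poly2 set)"
      by (rule minor_multiple_in_polyomino_ideal[OF inner])
    ultimately show ?thesis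
      by (simp add: single_uminus)
  qed (simp add: minor_multiple_in_polyomino_ideal[OF inner])
qed

lemma binomial_in_polyomino_ideal:
  assumes "finite P" "mdeg m = 2" "mdeg m' = 2"
    and "Poly_Mapping.keys m \<subseteq> vertices P" "Poly_Mapping.keys m' \<subseteq> vertices P"
    and "phi_mon P m = phi_mon P m'" "m \<noteq> m'"
  shows "Poly_Mapping.single m r - Poly_Mapping.single m' r \<in> (polyomino_ideal P :: 'k::comm_ring_1 poly2 set)"
proof -
  obtain a1 a2 b1 b2 where m: "m = mon2 (a1, a2) (b1, b2)"
    using assms(2) by (metis mdeg_eq_2E surj_pair)
  obtain c d where m': "m' = mon2 c d"
    using assms(3) by (rule mdeg_eq_2E)
  have eq: "phi_exp P (a1, a2) + phi_exp P (b1, b2) = phi_exp P c + phi_exp P d"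
    using assms(6) unfolding m m' phi_mon_mon2 .
  (* the h- and v-exponents match the rows and columns of c, d with those of a, b *)
  have "snd c = a2 \<and> snd d = b2 \<or> snd d = a2 \<and> snd c = b2"
    using phi_exp_add_eq_cases(1)[OF assms(1) eq] Hint_eq_iff[OF assms(1)] by (metis snd_conv)
  moreover have "fst c = a1 \<and> fst d = b1 \<or> fst d = a1 \<and> fst c = b1"
    using phi_exp_add_eq_cases(2)[OF assms(1) eq] Vint_eq_iff[OF assms(1)] by (metis fst_conv)
  ultimately have "m' = m \<or> m' = mon2 (a1, b2) (b1, a2)"
    unfolding m m' by (auto simp: prod_eq_iff mon2_commute)
  then have m'_eq: "m' = mon2 (a1, b2) (b1, a2)"
    using assms(7) by blast
  then have "a1 \<noteq> b1" "a2 \<noteq> b2"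
    using assms(7) m by (auto simp: mon2_commute)
  define i k j l where "i = min a1 b1" "k = max a1 b1" "j = min a2 b2" "l = max a2 b2"
  have diag: "m = mon2 (i, j) (k, l) \<and> m' = mon2 (i, l) (k, j) \<or> m = mon2 (i, l) (k, j) \<and> m' = mon2 (i, j) (k, l)"
    unfolding m m'_eq i_k_j_l_def using \<open>a1 \<noteq> b1\<close> \<open>a2 \<noteq> b2\<close>
    by (cases "a1 < b1"; cases "a2 < b2") (auto simp: min_def max_def mon2_commute)
  have "Poly_Mapping.keys (mon2 (i, j) (k, l)) \<union> Poly_Mapping.keys (mon2 (i, l) (k, j)) \<subseteq> vertices P"
    using diag assms(4,5) by blast
  then have "(i, j) \<in> vertices P" "(k, l) \<in> vertices P" "(i, l) \<in> vertices P" "(k, j) \<in> vertices P"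
    by (simp_all add: keys_mon2)
  moreover have "i < k" "j < l"
    using \<open>a1 \<noteq> b1\<close> \<open>a2 \<noteq> b2\<close> by (simp_all add: i_k_j_l_def)
  moreover have "phi_mon P (mon2 (i, j) (k, l)) = phi_mon P (mon2 (i, l) (k, j))"
    using diag assms(6) by auto
  ultimately show ?thesis
    using rectangle_binomial_in_polyomino_ideal[OF assms(1) _ _ _ _ _ _ _ diag] by blast
qed

lemma phi_kernel_in_ideal_gen:
  assumes "phi P p = 0" "Poly_Mapping.keys p \<subseteq> M"
    and binomial: "\<And>m m' c. m \<in> M \<Longrightarrow> m' \<in> M \<Longrightarrow> m \<noteq> m' \<Longrightarrow> phi_mon P m = phi_mon P m' \<Longrightarrow>
        Poly_Mapping.single m c - Poly_Mapping.single m' c \<in> ideal_gen R G"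
  shows "p \<in> ideal_gen R G"
  using assms(1,2)
proof (induction "card (Poly_Mapping.keys p)" arbitrary: p rule: less_induct)
  case less
  show ?case
  proof (cases "p = 0")
    case True
    then show ?thesis by (simp add: ideal_gen.zero)
  next
    case False
    then obtain m where m: "m \<in> Poly_Mapping.keys p"
      by fastforce
    define c where "c = Poly_Mapping.lookup p m"
    have "\<exists>m'\<in>Poly_Mapping.keys p. m' \<noteq> m \<and> phi_mon P m' = phi_mon P m"
    proof (rule ccontr)
      assume "\<not> ?thesis"
      then have "Poly_Mapping.keys p \<inter> {m'. phi_mon P m' = phi_mon P m} = {m}"
        using m by auto
      then have "Poly_Mapping.lookup (phi P p) (phi_mon P m) = c"
        by (simp add: lookup_phi c_def sum.If_cases)
      then show False
        using less.prems(1) m by (simp add: c_def in_keys_iff)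
    qed
    then obtain m' where m': "m' \<in> Poly_Mapping.keys p" "m' \<noteq> m" "phi_mon P m' = phi_mon P m"
      by blast
    define D where "D = Poly_Mapping.single m c - Poly_Mapping.single m' c"
    have keys: "Poly_Mapping.keys (p - D) \<subseteq> Poly_Mapping.keys p - {m}"
    proof
      fix x assume "x \<in> Poly_Mapping.keys (p - D)"
      then have "Poly_Mapping.lookup p x \<noteq> (if m = x then c else 0) - (if m' = x then c else 0)"
        by (simp add: D_def in_keys_iff lookup_minus lookup_single when_def)
      then show "x \<in> Poly_Mapping.keys p - {m}"
        using m'(1,2) unfolding c_def by (cases "x = m"; cases "x = m'") (auto simp: in_keys_iff)
    qed
    then have "Poly_Mapping.keys (p - D) \<subset> Poly_Mapping.keys p"
      using m by blast
    then have "card (Poly_Mapping.keys (p - D)) < card (Poly_Mapping.keys p)"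
      by (simp add: psubset_card_mono)
    moreover have "phi P (p - D) = 0"
      using less.prems(1) m'(3) by (simp add: D_def phi_diff phi_single)
    ultimately have "p - D \<in> ideal_gen R G"
      using less.hyps keys less.prems(2) by blast
    moreover have "D \<in> ideal_gen R G"
      unfolding D_def using m m' less.prems(2) by (intro binomial) auto
    ultimately show ?thesis
      using ideal_gen.add by fastforce
  qed
qed

theorem lemma3p1:
  fixes P :: "(nat \<times> nat) set"
  assumes "polyomino P"
  shows "(polyomino_ideal P :: 'k::field poly2 set)
           = ideal_gen (polyring (vertices P)) (graded_part 2 (toric_ideal P))"
proof
  have fin: "finite P"
    using assms by (simp add: polyomino_def)
  show "(polyomino_ideal P :: 'k poly2 set) \<subseteq> ideal_gen (polyring (vertices P)) (graded_part 2 (toric_ideal P))"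
  proof -
    have "inner_minors P \<subseteq> (graded_part 2 (toric_ideal P) :: 'k poly2 set)"
      unfolding inner_minors_def using minor_in_toric_ideal[OF fin] by blast
    then show ?thesis
      unfolding polyomino_ideal_def by (intro ideal_gen_subsetI) (auto intro: ideal_gen.gen)
  qed
  let ?M = "{m. mdeg m = 2 \<and> Poly_Mapping.keys m \<subseteq> vertices P}"
  have "p \<in> polyomino_ideal P" if "p \<in> graded_part 2 (toric_ideal P)" for p :: "'k poly2"
    unfolding polyomino_ideal_def
  proof (rule phi_kernel_in_ideal_gen[where M = ?M])
    show "phi P p = 0" "Poly_Mapping.keys p \<subseteq> ?M"
      using that by (auto simp: graded_part_def toric_ideal_def homogeneous_of_degree_def polyring_def)
  qed (auto intro: binomial_in_polyomino_ideal[OF fin, unfolded polyomino_ideal_def])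
  then show "ideal_gen (polyring (vertices P)) (graded_part 2 (toric_ideal P)) \<subseteq> (polyomino_ideal P :: 'k poly2 set)"
    unfolding polyomino_ideal_def by (intro ideal_gen_subsetI) auto
qed

end
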